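(* Let $k\ge 1$ be an integer and $c$ a real number with $40\le c\le k$. Let $F$ be the distribution on $\{0,1\}$ with $\mathbb{P}(1) = c/k$. Then $BRev(F^k)/SRev(F^k) > 0.56$.
   Context: For i.i.d. values $X_1,\dots,X_k\sim F$ of an additive buyer: $SRev(F^k) = k\cdot\sup_{p\ge0} p\,\mathbb{P}(X_1\ge p)$ is the maximal revenue from selling each item separately at posted prices, and $BRev(F^k) = \sup_{p\ge 0} p\,\mathbb{P}(X_1+\dots+X_k\ge p)$ is the maximal revenue from selling all items as one bundle at a posted price. For the given $F$, $SRev(F^k)=c$. *)

theory Defs
  imports "HOL-Probability.Probability"
begin

definition sum_dist :: "real pmf \<Rightarrow> nat \<Rightarrow> real pmf" where
  "sum_dist F k = map_pmf (\<lambda>x. \<Sum>i<k. x i) (Pi_pmf {..<k} 0 (\<lambda>_. F))"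

definition SRev :: "real pmf \<Rightarrow> nat \<Rightarrow> real" where
  "SRev F k = real k * (SUP p\<in>{0..}. p * measure_pmf.prob F {p..})"

definition BRev :: "real pmf \<Rightarrow> nat \<Rightarrow> real" where
  "BRev F k = (SUP p\<in>{0..}. p * measure_pmf.prob (sum_dist F k) {p..})"

definition bern01 :: "real \<Rightarrow> real pmf" where
  "bern01 q = map_pmf (\<lambda>b. if b then 1 else 0) (bernoulli_pmf q)"

end

theory Submission
  imports Defs
begin

text \<open>With P(1) = c/k the item sells separately for revenue exactly k \<cdot> c/k = c, while the
  number of items the buyer values is binomial with mean c. A Chernoff bound with the
  parameter r = 7/10 shows that this number is at least 7c/10 with probability above 4/5
  as soon as c \<ge> 40, so pricing the bundle at 7c/10 earns more than 0.56 c.\<close>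

lemma sum_dist_bern01:
  assumes "q \<in> {0..1}"
  shows "sum_dist (bern01 q) k = map_pmf real (binomial_pmf k q)"
proof -
  have count: "(\<Sum>i<k. if x i then 1 else 0::real) = real (card {i\<in>{..<k}. x i})"
    for x :: "nat \<Rightarrow> bool"
  proof -
    have "(\<Sum>i<k. if x i then 1 else 0::real) = (\<Sum>i\<in>{i\<in>{..<k}. x i}. 1)"
      by (intro sum.mono_neutral_cong_right) auto
    then show ?thesis by simp
  qed
  have "sum_dist (bern01 q) k = map_pmf (\<lambda>x. \<Sum>i<k. x i)
      (map_pmf (\<lambda>h. (\<lambda>b. if b then 1 else 0::real) \<circ> h) (Pi_pmf {..<k} False (\<lambda>_. bernoulli_pmf q)))"
    unfolding sum_dist_def bern01_def by (subst Pi_pmf_map) auto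
  also have "\<dots> = map_pmf real
      (map_pmf (\<lambda>f. card {i\<in>{..<k}. f i}) (Pi_pmf {..<k} False (\<lambda>_. bernoulli_pmf q)))"
    by (simp add: pmf.map_comp o_def count)
  also have "\<dots> = map_pmf real (binomial_pmf k q)"
    using binomial_pmf_altdef'[of "{..<k}" k q False] assms by simp
  finally show ?thesis .
qed

lemma prob_bern01_atLeast:
  assumes "q \<in> {0..1}"
  shows "measure_pmf.prob (bern01 q) {p..} = (if p \<le> 0 then 1 else if p \<le> 1 then q else 0)"
proof -
  have "measure_pmf.prob (bern01 q) {p..}
      = measure_pmf.prob (bernoulli_pmf q) ((\<lambda>b. if b then 1 else 0::real) -` {p..})"
    unfolding bern01_def by (simp add: measure_map_pmf)
  also have "(\<lambda>b. if b then 1 else 0::real) -` {p..}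
      = (if p \<le> 0 then UNIV else if p \<le> 1 then {True} else {})"
    by (auto split: if_splits)
  finally show ?thesis using assms by (auto simp: measure_pmf_single)
qed

lemma SRev_bern01:
  assumes "q \<in> {0..1}"
  shows "SRev (bern01 q) k = real k * q"
proof -
  have "(SUP p\<in>{0..}. p * measure_pmf.prob (bern01 q) {p..}) = q"
  proof (rule cSup_eq_maximum)
    show "q \<in> (\<lambda>p. p * measure_pmf.prob (bern01 q) {p..}) ` {0..}"
      by (rule image_eqI[of _ _ 1]) (use assms in \<open>auto simp: prob_bern01_atLeast\<close>)
  next
    fix y assume "y \<in> (\<lambda>p. p * measure_pmf.prob (bern01 q) {p..}) ` {0..}"
    then obtain p where "p \<ge> 0" "y = p * measure_pmf.prob (bern01 q) {p..}" by auto
    then show "y \<le> q"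
      using assms by (auto simp: prob_bern01_atLeast mult_left_le_one_le)
  qed
  then show ?thesis by (simp add: SRev_def)
qed

lemma binomial_pmf_le:
  assumes "q \<in> {0..1}" and "n \<in> set_pmf (binomial_pmf k q)"
  shows "n \<le> k"
  using assms by (auto simp: set_pmf_binomial_eq split: if_splits)

lemma BRev_bern01_ge:
  assumes q: "q \<in> {0..1}" and "0 \<le> p"
  shows "p * measure_pmf.prob (binomial_pmf k q) {n. p \<le> real n} \<le> BRev (bern01 q) k"
proof -
  let ?B = "binomial_pmf k q"
  have prob: "measure_pmf.prob (map_pmf real ?B) {x..} = measure_pmf.prob ?B {n. x \<le> real n}"
    for x
    by (simp add: measure_map_pmf vimage_def)
  have "bdd_above ((\<lambda>x. x * measure_pmf.prob (map_pmf real ?B) {x..}) ` {0..})"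
  proof (rule bdd_aboveI2)
    fix x :: real assume x: "x \<in> {0..}"
    show "x * measure_pmf.prob (map_pmf real ?B) {x..} \<le> real k"
    proof (cases "x \<le> real k")
      case True
      have "x * measure_pmf.prob (map_pmf real ?B) {x..} \<le> x * 1"
        by (rule mult_left_mono) (use x in auto)
      then show ?thesis using True by simp
    next
      case False
      then have "measure_pmf.prob ?B {n. x \<le> real n} = 0"
        unfolding measure_pmf_zero_iff using binomial_pmf_le[OF q] by force
      then show ?thesis by (subst prob) simp
    qed
  qed
  then have "p * measure_pmf.prob (map_pmf real ?B) {p..} \<le> BRev (bern01 q) k"
    unfolding BRev_def sum_dist_bern01[OF q] by (rule cSUP_upper[rotated]) (use assms in auto)
  then show ?thesis by (simp only: prob)
qed

lemma integral_binomial_pmf_power: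
  assumes "q \<in> {0..1}"
  shows "(\<integral>n. r ^ n \<partial>measure_pmf (binomial_pmf k q)) = (r * q + (1 - q)) ^ k"
proof -
  have "(\<integral>n. r ^ n \<partial>measure_pmf (binomial_pmf k q)) = (\<Sum>n\<le>k. r ^ n * pmf (binomial_pmf k q) n)"
    by (rule integral_measure_pmf_real) (use binomial_pmf_le[OF assms] in auto)
  also have "\<dots> = (\<Sum>n\<le>k. real (k choose n) * (r * q) ^ n * (1 - q) ^ (k - n))"
    using assms by (simp add: power_mult_distrib mult_ac)
  also have "\<dots> = (r * q + (1 - q)) ^ k"
    by (simp add: binomial_ring)
  finally show ?thesis .
qed

lemma binomial_lower_tail_chernoff:
  assumes q: "q \<in> {0..1}" and r: "0 < r" "r \<le> 1"
  shows "measure_pmf.prob (binomial_pmf k q) {n. real n \<le> A}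
           \<le> exp (- ln r * A - (1 - r) * (real k * q))"
proof -
  let ?B = "binomial_pmf k q"
  have fin: "finite (set_pmf ?B)" using q by auto
  \<comment> \<open>Markov's inequality for r^n, a decreasing function of n.\<close>
  have markov: "indicator {n. real n \<le> A} n \<le> r ^ n * exp (- ln r * A)" for n :: nat
  proof (cases "real n \<le> A")
    case True
    have "0 \<le> ln r * (real n - A)" using r True by (simp add: mult_nonpos_nonpos)
    then have "1 \<le> exp (ln r * (real n - A))" by simp
    also have "exp (ln r * (real n - A)) = exp (real n * ln r) * exp (- ln r * A)"
      by (simp add: exp_add[symmetric] algebra_simps)
    also have "exp (real n * ln r) = r ^ n"
      using r by (simp add: exp_of_nat_mult)
    finally show ?thesis using True by simp
  qed (use r in simp)
  have "measure_pmf.prob ?B {n. real n \<le> A} = (\<integral>n. indicator {n. real n \<le> A} n \<partial>measure_pmf ?B)"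
    by simp
  also have "\<dots> \<le> (\<integral>n. r ^ n * exp (- ln r * A) \<partial>measure_pmf ?B)"
    by (rule integral_mono) (use markov integrable_measure_pmf_finite[OF fin] in auto)
  also have "\<dots> = exp (- ln r * A) * (r * q + (1 - q)) ^ k"
    using integral_binomial_pmf_power[OF q] by simp
  also have "(r * q + (1 - q)) ^ k \<le> exp (- (1 - r) * q) ^ k"
  proof (rule power_mono)
    show "r * q + (1 - q) \<le> exp (- (1 - r) * q)"
      using exp_ge_add_one_self[of "- (1 - r) * q"] by (simp add: algebra_simps)
    show "0 \<le> r * q + (1 - q)" using q r by simp
  qed
  also have "exp (- (1 - r) * q) ^ k = exp (- (1 - r) * (real k * q))"
    by (simp add: exp_of_nat_mult[symmetric] mult_ac)
  finally show ?thesis by (simp add: exp_add[symmetric] algebra_simps)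
qed

lemma ln_seven_tenths_ge: "ln (7/10::real) \<ge> -(9/25)"
proof -
  have "(101/100::real) ^ 36 \<le> exp (1/100) ^ 36"
    by (rule power_mono) (use exp_ge_add_one_self[of "1/100::real"] in auto)
  also have "exp (1/100::real) ^ 36 = exp (9/25)"
    by (simp add: exp_of_nat_mult[symmetric])
  finally have "10/7 \<le> exp (9/25::real)" by (simp add: power_divide)
  then have "exp (-(9/25)::real) \<le> 7/10" by (simp add: exp_minus field_simps)
  then show ?thesis by (simp add: ln_ge_iff)
qed

lemma exp_minus_48_25_less: "exp (-48/25::real) < 1/5"
proof -
  have "(31/25::real) ^ 8 \<le> exp (6/25) ^ 8"
    by (rule power_mono) (use exp_ge_add_one_self[of "6/25::real"] in auto)
  also have "exp (6/25::real) ^ 8 = exp (48/25)"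
    by (simp add: exp_of_nat_mult[symmetric])
  finally have "5 < exp (48/25::real)" by (simp add: power_divide)
  then show ?thesis by (simp add: exp_minus field_simps)
qed

lemma binomial_upper_part_gt:
  assumes q: "q \<in> {0..1}" and c: "real k * q = c" "40 \<le> c"
  shows "measure_pmf.prob (binomial_pmf k q) {n. 7/10 * c \<le> real n} > 4/5"
proof -
  let ?B = "binomial_pmf k q"
  have "measure_pmf.prob ?B {n. real n \<le> 7/10 * c}
      \<le> exp (- ln (7/10) * (7/10 * c) - (1 - 7/10) * c)"
    using binomial_lower_tail_chernoff[OF q, where k = k and r = "7/10" and A = "7/10 * c"] c
    by simp
  also have "\<dots> \<le> exp (-48/25)"
  proof -
    have "- ln (7/10) * c \<le> 9/25 * c"
      by (rule mult_right_mono) (use ln_seven_tenths_ge c in auto)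
    then show ?thesis using c by (simp add: algebra_simps)
  qed
  also have "\<dots> < 1/5" by (rule exp_minus_48_25_less)
  finally have "measure_pmf.prob ?B {n. real n \<le> 7/10 * c} < 1/5" .
  moreover have "measure_pmf.prob ?B (UNIV - {n. real n \<le> 7/10 * c})
      \<le> measure_pmf.prob ?B {n. 7/10 * c \<le> real n}"
    by (rule measure_pmf.finite_measure_mono) auto
  ultimately show ?thesis
    using measure_pmf.prob_compl[of "{n. real n \<le> 7/10 * c}" ?B] by simp
qed

theorem lemma1:
  fixes k :: nat and c :: real
  assumes "k \<ge> 1" and "40 \<le> c" and "c \<le> real k"
  shows "BRev (bern01 (c / real k)) k / SRev (bern01 (c / real k)) k > 0.56"
proof -
  define q where "q = c / real k"
  have q: "q \<in> {0..1}" using assms by (auto simp: q_def)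
  have kq: "real k * q = c" using assms by (simp add: q_def)
  have S: "SRev (bern01 q) k = c" using SRev_bern01[OF q] kq by simp
  have "0.56 * c < 7/10 * c * measure_pmf.prob (binomial_pmf k q) {n. 7/10 * c \<le> real n}"
    using binomial_upper_part_gt[OF q kq assms(2)] assms(2) by simp
  also have "\<dots> \<le> BRev (bern01 q) k"
    by (rule BRev_bern01_ge[OF q]) (use assms in simp)
  finally have "0.56 < BRev (bern01 q) k / SRev (bern01 q) k"
    using assms by (simp add: S pos_less_divide_eq mult.commute)
  then show ?thesis by (simp add: q_def)
qed

end
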